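(* Define the sequence $(\psi_n)_{n\ge1}$ by $\psi_1=1$ and, for $n\ge2$, $$\psi_n=\Big(1+\frac1n\Big)\psi_{n-1}\ \text{ if $n$ is even},\qquad \psi_n=\Big(1+\frac1n\Big)\psi_{n-1}-\frac{2}{n}\psi_{(n-1)/2}\ \text{ if $n$ is odd}.$$ Then $\lim_{n\to\infty}\psi_n=\dfrac{1}{2-2\ln2}$. Equivalently, the Taylor coefficients $\varphi_n=n\psi_n$ of the solution $\Phi$ of $\int_0^1\Phi(rz+(1-r)z^2)\,dr=\frac12\Phi(z)$, $\Phi(0)=0$, $\Phi'(0)=1$, satisfy $\varphi_n/n\to\frac1{2(1-\ln 2)}$. *)

theory Defs
  imports Complex_Main
begin

text \<open>The sequence psi_n for n >= 1; the value at 0 is a dummy (never used for n >= 1,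
  since for odd n >= 3 we have (n-1)/2 = n div 2 >= 1).\<close>
fun psi :: "nat \<Rightarrow> real" where
  "psi n =
     (if n = 0 then 0
      else if n = 1 then 1
      else if even n then (1 + 1 / real n) * psi (n - 1)
      else (1 + 1 / real n) * psi (n - 1) - (2 / real n) * psi ((n - 1) div 2))"

declare psi.simps [simp del]

end

(*
  Telescoping the recurrence gives the exact identity
    psi (2m+1) = 1/2 + sum over m < k <= 2m+1 of psi k / (k+1).
  Since psi (2j) / (2j+1) = psi (2j-1) / (2j), the window sum only involves odd-index values
  psi j with m <= j <= 2m, with nonnegative weights whose total is at most ln 2 and tends to ln 2.
  Hence L = 1/2 + L ln 2 is the only candidate limit, the odd values stay bounded, and their
  deviation from L shrinks by a factor of about ln 2 < 1 whenever the index doubles.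
  Even indices follow from psi (2m+2) = (1 + 1/(2m+2)) psi (2m+1).
*)

theory Submission
  imports Defs "HOL-Analysis.Harmonic_Numbers" "HOL-Real_Asymp.Real_Asymp"
begin

lemma psi_Suc_0: "psi (Suc 0) = 1"
  by (subst psi.simps) simp

lemma psi_even: "even n \<Longrightarrow> n \<ge> 2 \<Longrightarrow> psi n = (1 + 1 / real n) * psi (n - 1)"
  by (subst psi.simps) simp

lemma psi_odd:
  "psi (2*m + 3) = (1 + 1 / real (2*m + 3)) * psi (2*m + 2) - 2 / real (2*m + 3) * psi (m + 1)"
  by (subst psi.simps) simp

lemma psi_odd_eq_half_plus_sum:
  "psi (2*m + 1) = 1/2 + (\<Sum>k\<in>{m<..2*m + 1}. psi k / (real k + 1))"
proof (induction m)
  case 0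
  have "{0<..1::nat} = {1}" by auto
  then show ?case by (simp add: psi_Suc_0)
next
  case (Suc m)
  define t where "t k = psi k / (real k + 1)" for k
  have even_step: "psi (2*m + 2) = (2 * real m + 3) / (2 * real m + 2) * psi (2*m + 1)"
    using psi_even[of "2*m + 2"] by (simp add: field_simps)
  have odd_step: "psi (2*m + 3) = (2 * real m + 4) / (2 * real m + 2) * psi (2*m + 1)
                           - 2 / (2 * real m + 3) * psi (m + 1)"
    unfolding psi_odd even_step by (simp add: divide_simps)
  have increment: "psi (2*m + 3) = psi (2*m + 1) - t (m + 1) + t (2*m + 2) + t (2*m + 3)"
    unfolding t_def even_step odd_step by (simp add: divide_simps) (simp add: algebra_simps)
  have "{m<..2*m + 3} = insert (m + 1) {Suc m<..2 * Suc m + 1}" by auto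
  then have "sum t {m<..2*m + 3} = t (m + 1) + sum t {Suc m<..2 * Suc m + 1}" by simp
  moreover have "{m<..2*m + 3} = insert (2*m + 3) (insert (2*m + 2) {m<..2*m + 1})" by auto
  then have "sum t {m<..2*m + 3} = t (2*m + 3) + t (2*m + 2) + sum t {m<..2*m + 1}" by simp
  ultimately have "sum t {Suc m<..2 * Suc m + 1}
                     = sum t {m<..2*m + 1} - t (m + 1) + t (2*m + 2) + t (2*m + 3)"
    by simp
  then show ?case using Suc.IH increment by (simp add: t_def eval_nat_numeral)
qed

definition odd_floor :: "nat \<Rightarrow> nat" where
  "odd_floor k = (if odd k then k else k - 1)"

definition odd_weight :: "nat \<Rightarrow> real" where
  "odd_weight k = (if odd k then 1 / (real k + 1) else 1 / real k)"

lemma odd_weight_nonneg: "odd_weight k \<ge> 0"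
  by (simp add: odd_weight_def)

lemma psi_div_Suc_eq_odd_weight:
  assumes "k \<ge> 1"
  shows "psi k / (real k + 1) = odd_weight k * psi (odd_floor k)"
proof (cases "odd k")
  case True
  then show ?thesis by (simp add: odd_weight_def odd_floor_def)
next
  case False
  with assms have "k \<ge> 2" by presburger
  with False have "psi k = (1 + 1 / real k) * psi (k - 1)"
    by (simp add: psi_even)
  then have "psi k / (real k + 1) = psi (k - 1) / real k"
    using \<open>k \<ge> 2\<close> by (simp add: field_simps)
  with False \<open>k \<ge> 2\<close> show ?thesis by (simp add: odd_weight_def odd_floor_def)
qed

definition window_weight :: "nat \<Rightarrow> real" where
  "window_weight m = (\<Sum>k\<in>{m<..2*m}. odd_weight k)"

lemma psi_odd_window_eq:
  "psi (2*m + 1) * ((2 * real m + 1) / (2 * real m + 2))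
     = 1/2 + (\<Sum>k\<in>{m<..2*m}. odd_weight k * psi (odd_floor k))"
proof -
  have "{m<..2*m + 1} = insert (2*m + 1) {m<..2*m}" by auto
  then have "psi (2*m + 1) = 1/2 + psi (2*m + 1) / (2 * real m + 2)
                              + (\<Sum>k\<in>{m<..2*m}. psi k / (real k + 1))"
    using psi_odd_eq_half_plus_sum[of m] by (simp add: add_ac)
  moreover have "(\<Sum>k\<in>{m<..2*m}. psi k / (real k + 1))
                   = (\<Sum>k\<in>{m<..2*m}. odd_weight k * psi (odd_floor k))"
    by (intro sum.cong refl psi_div_Suc_eq_odd_weight) auto
  ultimately show ?thesis by (simp add: field_simps)
qed

lemma psi_odd_deviation_le:
  assumes close: "\<And>j. odd j \<Longrightarrow> m \<le> j \<Longrightarrow> j \<le> 2*m \<Longrightarrow> \<bar>psi j - a\<bar> \<le> B"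
  shows "\<bar>psi (2*m + 1) - a\<bar> * ((2 * real m + 1) / (2 * real m + 2))
           \<le> \<bar>1/2 + a * window_weight m - a * ((2 * real m + 1) / (2 * real m + 2))\<bar>
              + window_weight m * B"
proof -
  let ?r = "(2 * real m + 1) / (2 * real m + 2)"
  have "(psi (2*m + 1) - a) * ?r = (1/2 + a * window_weight m - a * ?r)
          + (\<Sum>k\<in>{m<..2*m}. odd_weight k * (psi (odd_floor k) - a))"
  proof -
    have "(\<Sum>k\<in>{m<..2*m}. odd_weight k * (psi (odd_floor k) - a))
            = (\<Sum>k\<in>{m<..2*m}. odd_weight k * psi (odd_floor k)) - a * window_weight m"
      by (simp add: window_weight_def algebra_simps sum_subtractf sum_distrib_left)
    then show ?thesis
      using psi_odd_window_eq[of m] by (simp only: left_diff_distrib)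
  qed
  moreover have "\<bar>\<Sum>k\<in>{m<..2*m}. odd_weight k * (psi (odd_floor k) - a)\<bar> \<le> window_weight m * B"
  proof -
    have "\<bar>\<Sum>k\<in>{m<..2*m}. odd_weight k * (psi (odd_floor k) - a)\<bar>
            \<le> (\<Sum>k\<in>{m<..2*m}. odd_weight k * B)"
    proof (rule order_trans[OF sum_abs sum_mono])
      fix k assume "k \<in> {m<..2*m}"
      then have "\<bar>psi (odd_floor k) - a\<bar> \<le> B"
        by (intro close) (auto simp: odd_floor_def)
      then show "\<bar>odd_weight k * (psi (odd_floor k) - a)\<bar> \<le> odd_weight k * B"
        by (simp add: abs_mult mult_left_mono odd_weight_nonneg)
    qed
    then show ?thesis by (simp add: window_weight_def sum_distrib_right)
  qed
  ultimately show ?thesis by (simp add: abs_mult)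
qed

lemma harm_diff_eq_sum: "m \<le> n \<Longrightarrow> harm n - harm m = (\<Sum>k\<in>{m<..n}. 1 / real k)"
proof (induction n rule: dec_induct)
  case (step n)
  then have "{m<..Suc n} = insert (Suc n) {m<..n}" by auto
  with step show ?case by (simp add: harm_Suc inverse_eq_divide)
qed simp

lemma window_weight_le_harm_diff: "window_weight m \<le> harm (2*m) - harm m"
proof -
  have "window_weight m \<le> (\<Sum>k\<in>{m<..2*m}. 1 / real k)"
    unfolding window_weight_def by (rule sum_mono) (auto simp: odd_weight_def divide_simps)
  then show ?thesis using harm_diff_eq_sum[of m "2*m"] by simp
qed

lemma harm_diff_le_window_weight: "harm (2*m + 1) - harm (m + 1) \<le> window_weight m"
proof -
  have "harm (2*m + 1) - harm (m + 1) = (\<Sum>k\<in>{m<..2*m}. 1 / (real k + 1))"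
    using sum.reindex[of Suc "{m<..2*m}" "\<lambda>k. 1 / real k"]
          harm_diff_eq_sum[of "m + 1" "2*m + 1"] image_add_greaterThanAtMost[of 1 m "2*m"]
    by (simp add: add_ac)
  also have "\<dots> \<le> window_weight m"
    unfolding window_weight_def by (rule sum_mono) (auto simp: odd_weight_def divide_simps)
  finally show ?thesis .
qed

lemma window_weight_le_ln2: "window_weight m \<le> ln 2"
proof (cases "m = 0")
  case True
  then show ?thesis by (simp add: window_weight_def)
next
  case False
  then have "harm (2*m) - ln (real (2*m)) \<le> harm m - ln (real m :: real)"
    by (intro euler_mascheroni_sequence_decreasing) auto
  with False show ?thesis
    using window_weight_le_harm_diff[of m] by (simp add: ln_mult)
qed

lemma window_weight_tendsto: "window_weight \<longlonglongrightarrow> ln 2"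
proof (rule tendsto_sandwich[OF _ _ _ tendsto_const])
  have "(\<lambda>m. (harm (2*m + 1) - ln (real (2*m + 1))) - (harm (m + 1) - ln (real (m + 1)))
           + ln ((2 * real m + 1) / (real m + 1)) :: real)
        \<longlonglongrightarrow> euler_mascheroni - euler_mascheroni + ln 2"
  proof (intro tendsto_intros)
    show "(\<lambda>m. harm (2*m + 1) - ln (real (2*m + 1)) :: real) \<longlonglongrightarrow> euler_mascheroni"
      using LIMSEQ_subseq_LIMSEQ[OF euler_mascheroni_LIMSEQ, of "\<lambda>m. 2*m + 1"]
      by (simp add: strict_mono_def o_def)
    show "(\<lambda>m. harm (m + 1) - ln (real (m + 1)) :: real) \<longlonglongrightarrow> euler_mascheroni"
      using LIMSEQ_subseq_LIMSEQ[OF euler_mascheroni_LIMSEQ, of "\<lambda>m. m + 1"]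
      by (simp add: strict_mono_def o_def)
    show "(\<lambda>m. (2 * real m + 1) / (real m + 1)) \<longlonglongrightarrow> 2" by real_asymp
  qed simp
  then show "(\<lambda>m. harm (2*m + 1) - harm (m + 1)) \<longlonglongrightarrow> (ln 2 :: real)"
    by (simp add: ln_div add_ac)
  show "\<forall>\<^sub>F m in sequentially. harm (2*m + 1) - harm (m + 1) \<le> window_weight m"
    by (intro always_eventually allI harm_diff_le_window_weight)
  show "\<forall>\<^sub>F m in sequentially. window_weight m \<le> ln 2"
    by (intro always_eventually allI window_weight_le_ln2)
qed

lemma abs_psi_odd_le_9: "odd n \<Longrightarrow> \<bar>psi n\<bar> \<le> 9"
proof (induction n rule: less_induct)
  case (less n)
  then obtain m where n: "n = 2*m + 1" by (metis oddE)
  show ?case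
  proof (cases "m = 0")
    case True
    with n show ?thesis by (simp add: psi_Suc_0)
  next
    case False
    have "\<bar>psi n\<bar> * ((2 * real m + 1) / (2 * real m + 2)) \<le> 1/2 + window_weight m * 9"
      using n psi_odd_deviation_le[of m 0 9] less.IH by auto
    also have "\<dots> \<le> 1/2 + 25/36 * 9"
      using window_weight_le_ln2[of m] ln2_le_25_over_36 by simp
    finally have "\<bar>psi n\<bar> * (2 * real m + 1) \<le> 27/4 * (2 * real m + 2)"
      using n by (simp add: field_simps)
    moreover have "27/4 * (2 * real m + 2) \<le> 9 * (2 * real m + 1)"
      using False by simp
    ultimately have "\<bar>psi n\<bar> * (2 * real m + 1) \<le> 9 * (2 * real m + 1)"
      by linarith
    then show ?thesis by (rule mult_right_le_imp_le) simp
  qed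
qed

lemma bound_contraction:
  fixes P :: "real \<Rightarrow> bool" and c B\<^sub>0 \<epsilon> :: real
  assumes mono: "\<And>B B'. P B \<Longrightarrow> B \<le> B' \<Longrightarrow> P B'"
    and start: "P B\<^sub>0" "B\<^sub>0 \<ge> 0"
    and c: "0 \<le> c" "c < 1"
    and step: "\<And>B \<eta>. B \<ge> 0 \<Longrightarrow> \<eta> > 0 \<Longrightarrow> P B \<Longrightarrow> P (c * B + \<eta>)"
    and "\<epsilon> > 0"
  shows "P \<epsilon>"
proof -
  have iterate: "P (c^k * B\<^sub>0 + \<epsilon>/2 * (1 - c^k))" for k
  proof (induction k)
    case 0
    show ?case using start by simp
  next
    case (Suc k)
    have "c^k \<le> 1" using c by (simp add: power_le_one)
    then have "c^k * B\<^sub>0 + \<epsilon>/2 * (1 - c^k) \<ge> 0"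
      using start c \<open>\<epsilon> > 0\<close> by simp
    then have "P (c * (c^k * B\<^sub>0 + \<epsilon>/2 * (1 - c^k)) + (1 - c) * \<epsilon>/2)"
      using c \<open>\<epsilon> > 0\<close> by (intro step Suc.IH) simp_all
    moreover have "c * (c^k * B\<^sub>0 + \<epsilon>/2 * (1 - c^k)) + (1 - c) * \<epsilon>/2
                     = c^Suc k * B\<^sub>0 + \<epsilon>/2 * (1 - c^Suc k)"
      by (simp add: field_simps)
    ultimately show ?case by simp
  qed
  have "(\<lambda>k. c^k * B\<^sub>0) \<longlonglongrightarrow> 0"
    using tendsto_mult_right[OF LIMSEQ_realpow_zero[OF c], of B\<^sub>0] by simp
  then have "\<forall>\<^sub>F k in sequentially. c^k * B\<^sub>0 < \<epsilon>/2"
    by (rule order_tendstoD(2)) (use \<open>\<epsilon> > 0\<close> in simp)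
  then obtain k where "c^k * B\<^sub>0 < \<epsilon>/2"
    by (auto simp: eventually_sequentially)
  moreover have "0 \<le> \<epsilon>/2 * c^k"
    using c \<open>\<epsilon> > 0\<close> by simp
  ultimately have "c^k * B\<^sub>0 + \<epsilon>/2 * (1 - c^k) \<le> \<epsilon>"
    unfolding right_diff_distrib by linarith
  with iterate mono show ?thesis by blast
qed

definition psi_limit :: real where
  "psi_limit = 1 / (2 - 2 * ln 2)"

lemma psi_limit_defect_tendsto:
  "(\<lambda>m. 1/2 + psi_limit * window_weight m - psi_limit * ((2 * real m + 1) / (2 * real m + 2)))
     \<longlonglongrightarrow> 0"
proof -
  have "(\<lambda>m. (2 * real m + 1) / (2 * real m + 2)) \<longlonglongrightarrow> 1" by real_asymp
  then have "(\<lambda>m. 1/2 + psi_limit * window_weight m - psi_limit * ((2 * real m + 1) / (2 * real m + 2)))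
               \<longlonglongrightarrow> 1/2 + psi_limit * ln 2 - psi_limit * 1"
    by (intro tendsto_intros window_weight_tendsto)
  moreover have "1/2 + psi_limit * ln 2 - psi_limit * 1 = 0"
    using ln_2_less_1 by (simp add: psi_limit_def field_simps)
  ultimately show ?thesis by simp
qed

lemma psi_odd_error_contracts:
  assumes "B \<ge> 0" "\<eta> > 0"
    and "\<forall>\<^sub>F m in sequentially. \<bar>psi (2*m + 1) - psi_limit\<bar> \<le> B"
  shows "\<forall>\<^sub>F m in sequentially. \<bar>psi (2*m + 1) - psi_limit\<bar> \<le> 4/5 * B + \<eta>"
proof -
  from assms(3) obtain N where N: "\<And>i. i \<ge> N \<Longrightarrow> \<bar>psi (2*i + 1) - psi_limit\<bar> \<le> B"
    by (auto simp: eventually_sequentially)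
  have "\<forall>\<^sub>F m in sequentially. \<forall>j. odd j \<longrightarrow> m \<le> j \<longrightarrow> \<bar>psi j - psi_limit\<bar> \<le> B"
    using eventually_ge_at_top[of "2*N"]
    by eventually_elim (auto intro!: N elim!: oddE)
  moreover have "\<forall>\<^sub>F m in sequentially.
      \<bar>1/2 + psi_limit * window_weight m - psi_limit * ((2 * real m + 1) / (2 * real m + 2))\<bar> < \<eta>/2"
    using order_tendstoD(2)[OF tendsto_rabs_zero[OF psi_limit_defect_tendsto], of "\<eta>/2"] assms(2)
    by simp
  moreover have "\<forall>\<^sub>F m in sequentially. m \<ge> 3"
    by (rule eventually_ge_at_top)
  ultimately show ?thesis
  proof eventually_elim
    case (elim m)
    let ?r = "(2 * real m + 1) / (2 * real m + 2)"
    define e where "e = \<bar>psi (2*m + 1) - psi_limit\<bar>"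
    have "7/8 * e \<le> e * ?r"
      using elim(3) by (subst mult.commute) (intro mult_left_mono, simp_all add: e_def field_simps)
    also have "\<dots> \<le> \<bar>1/2 + psi_limit * window_weight m - psi_limit * ?r\<bar> + window_weight m * B"
      unfolding e_def by (rule psi_odd_deviation_le) (use elim(1) in auto)
    also have "\<dots> \<le> \<eta>/2 + 25/36 * B"
      using elim(2) window_weight_le_ln2[of m] ln2_le_25_over_36 \<open>B \<ge> 0\<close>
      by (intro add_mono mult_right_mono) simp_all
    finally show ?case using assms(1,2) unfolding e_def[symmetric] by linarith
  qed
qed

lemma psi_odd_tendsto: "(\<lambda>m. psi (2*m + 1)) \<longlonglongrightarrow> psi_limit"
proof -
  let ?P = "\<lambda>B. \<forall>\<^sub>F m in sequentially. \<bar>psi (2*m + 1) - psi_limit\<bar> \<le> B"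
  have small: "?P \<epsilon>" if "\<epsilon> > 0" for \<epsilon>
  proof (rule bound_contraction[where c = "4/5" and B\<^sub>0 = "9 + \<bar>psi_limit\<bar>"])
    show "?P B'" if "?P B" "B \<le> B'" for B B'
      using that(1) by eventually_elim (use that(2) in simp)
    show "?P (9 + \<bar>psi_limit\<bar>)"
      by (intro always_eventually allI order_trans[OF abs_triangle_ineq4])
         (simp add: abs_psi_odd_le_9)
  qed (use psi_odd_error_contracts that in auto)
  show ?thesis
  proof (rule tendstoI)
    fix \<epsilon> :: real assume "\<epsilon> > 0"
    then have "?P (\<epsilon>/2)" by (intro small) simp
    then show "\<forall>\<^sub>F m in sequentially. dist (psi (2*m + 1)) psi_limit < \<epsilon>"
      by eventually_elim (use \<open>\<epsilon> > 0\<close> in \<open>simp add: dist_real_def\<close>)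
  qed
qed

lemma LIMSEQ_even_odd:
  assumes "(\<lambda>n. f (2*n)) \<longlonglongrightarrow> l" and "(\<lambda>n. f (2*n + 1)) \<longlonglongrightarrow> l"
  shows "f \<longlonglongrightarrow> l"
proof (rule topological_tendstoI)
  fix S assume "open S" "l \<in> S"
  then have "\<forall>\<^sub>F n in sequentially. f (2*n) \<in> S \<and> f (2*n + 1) \<in> S"
    using assms by (intro eventually_conj topological_tendstoD)
  then obtain N where N: "\<And>n. n \<ge> N \<Longrightarrow> f (2*n) \<in> S \<and> f (2*n + 1) \<in> S"
    by (auto simp: eventually_sequentially)
  show "\<forall>\<^sub>F n in sequentially. f n \<in> S"
  proof (rule eventually_sequentiallyI[of "2*N"])
    fix n assume "n \<ge> 2*N"
    then show "f n \<in> S"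
      using N[of "n div 2"] by (cases "even n") (auto elim!: evenE oddE)
  qed
qed

theorem mainTheorem6:
  shows "psi \<longlonglongrightarrow> 1 / (2 - 2 * ln 2)"
proof -
  have "(\<lambda>m. (1 + 1 / real (2*m + 2)) * psi (2*m + 1)) \<longlonglongrightarrow> 1 * psi_limit"
    by (intro tendsto_mult psi_odd_tendsto) real_asymp
  then have "(\<lambda>m. psi (2 * Suc m)) \<longlonglongrightarrow> psi_limit"
    by (simp add: psi_even)
  then have "(\<lambda>m. psi (2*m)) \<longlonglongrightarrow> psi_limit"
    by (rule filterlim_sequentially_Suc[THEN iffD1])
  then show ?thesis
    using psi_odd_tendsto unfolding psi_limit_def by (rule LIMSEQ_even_odd)
qed

end
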